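(* Let $x\in(0,1)$ and let $\mu^{(x)}$ be the joint distribution of $(\zeta(x),\zeta(1))$ as in the context. Let $z=(z_1,z_2)\in[0,2]^2$ have finite binary expansions $z_1=\sum_{k=1}^m\gamma_k2^{-(k-1)}$ and $z_2=\sum_{k=1}^n\gamma'_k2^{-(k-1)}$ with $\gamma_k,\gamma'_k\in\{0,1\}$, such that the word $\gamma_1\gamma_2\cdots\gamma_m$ is a substring of $\gamma'_1\gamma'_2\cdots\gamma'_n$. Then the local dimension $$\dim_{\mathrm{loc}}(\mu^{(x)},z):=\lim_{r\downarrow0}\frac{\log\mu^{(x)}(B_r(z))}{\log r}$$ exists and equals $2-\frac{\log(1+x)}{\log 2}$, where $B_r(z)$ is the closed Euclidean ball of radius $r$ centred at $z$.
   Context: Let $(Q_n)_{n\ge1}$ be i.i.d. random variables taking values $0$ and $1$ with probability $1/2$ each, and independently let $(U_n)_{n\ge1}$ be i.i.d. uniform on $[0,1]$. For $y\in(0,1]$ let $T_n(y)=\sum_{j=1}^n\mathbbm{1}_{\{U_j\le y\}}$ (with $T_0(y)=0$) and $$\zeta(y)=\sum_{n=1}^\infty(1/2)^{T_{n-1}(y)}Q_n\mathbbm{1}_{\{U_n\le y\}}.$$ In particular $\zeta(1)=\sum_{n\ge1}2^{-(n-1)}Q_n$; each $\zeta(y)$ is uniformly distributed on $[0,2]$. *)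

theory Defs
  imports "HOL-Probability.Probability"
begin

definition Tcount :: "(nat \<Rightarrow> real) \<Rightarrow> real \<Rightarrow> nat \<Rightarrow> nat" where
  "Tcount U y n = card {j \<in> {1..n}. U j \<le> y}"

text \<open>zeta(y) = sum over n \<ge> 1 of (1/2)^(T_(n-1)(y)) * Q_n * 1[U_n \<le> y];
  the summation index k corresponds to n = k + 1.\<close>
definition zeta :: "(nat \<Rightarrow> real) \<Rightarrow> (nat \<Rightarrow> real) \<Rightarrow> real \<Rightarrow> real" where
  "zeta Q U y = (\<Sum>k. (1/2) ^ (Tcount U y k) * Q (Suc k) * indicator {..y} (U (Suc k)))"

definition mu :: "'w measure \<Rightarrow> (nat \<Rightarrow> 'w \<Rightarrow> real) \<Rightarrow> (nat \<Rightarrow> 'w \<Rightarrow> real) \<Rightarrow> real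
    \<Rightarrow> (real \<times> real) measure" where
  "mu M Q U x = distr M borel
     (\<lambda>\<omega>. (zeta (\<lambda>n. Q n \<omega>) (\<lambda>n. U n \<omega>) x, zeta (\<lambda>n. Q n \<omega>) (\<lambda>n. U n \<omega>) 1))"

end

theory Submission
  imports Defs
begin

text \<open>Conditioning on the first step \<open>(Q\<^sub>1, U\<^sub>1)\<close>, and using that the shifted sequences have the
  same joint law and are independent of \<open>(Q\<^sub>1, U\<^sub>1)\<close>, the law \<open>\<mu>\<close> of \<open>(\<zeta>(x), \<zeta>(1))\<close> is
  invariant under an iterated function system: it is the mixture, with weights \<open>x/2\<close> and \<open>(1-x)/2\<close>,
  of its images under \<open>p \<mapsto> (q + p\<^sub>1/2, q + p\<^sub>2/2)\<close> and \<open>p \<mapsto> (p\<^sub>1, q + p\<^sub>2/2)\<close> for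
  \<open>q \<in> {0, 1}\<close>. Iterating the invariance on dyadic squares of side \<open>2 * 2^-l\<close> shows that each of
  them has mass at most \<open>((1+x)/4)^l\<close>, and the one at the origin at least that much.
  A point whose coordinates have finite binary expansions, the first word occurring in the second,
  is the image of the origin under a finite composition of these maps: the first coordinate is moved
  exactly along the window where the word occurs. As the maps do not expand distances, the balls
  of radius about \<open>2^-l\<close> around that point have mass comparable to \<open>((1+x)/4)^l\<close>, and the local
  dimension is \<open>-log((1+x)/4) / log 2\<close>.\<close>

section \<open>The random series\<close>

lemma Tcount_0 [simp]: "Tcount U y 0 = 0"
  by (simp add: Tcount_def)

lemma Tcount_Suc: "Tcount U y (Suc k) = Tcount U y k + (if U (Suc k) \<le> y then 1 else 0)"
proof -
  have "{j \<in> {1..Suc k}. U j \<le> y} = {j \<in> {1..k}. U j \<le> y} \<union> (if U (Suc k) \<le> y then {Suc k} else {})"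
    by (auto simp: le_Suc_eq)
  then show ?thesis
    unfolding Tcount_def by (simp add: card_insert_if)
qed

lemma Tcount_Suc_shift:
  "Tcount U y (Suc k) = (if U 1 \<le> y then 1 else 0) + Tcount (\<lambda>n. U (Suc n)) y k"
  by (induction k) (simp_all add: Tcount_Suc)

lemma Tcount_cong: "(\<And>j. j \<ge> 1 \<Longrightarrow> U j = U' j) \<Longrightarrow> Tcount U y k = Tcount U' y k"
  unfolding Tcount_def by (intro arg_cong[where f=card]) auto

lemma half_power_Tcount: "(1/2::real) ^ Tcount U y k = (\<Prod>j\<in>{1..k}. if U j \<le> y then 1/2 else 1)"
  by (induction k) (simp_all add: Tcount_Suc prod.nat_ivl_Suc')

lemma sum_half_power_Tcount:
  "(\<Sum>k<N. (1/2::real) ^ Tcount U y k * indicator {..y} (U (Suc k))) = 2 - 2 * (1/2) ^ Tcount U y N"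
  by (induction N) (auto simp: Tcount_Suc indicator_def)

lemma zeta_cong:
  "(\<And>j. j \<ge> 1 \<Longrightarrow> Q j = Q' j) \<Longrightarrow> (\<And>j. j \<ge> 1 \<Longrightarrow> U j = U' j) \<Longrightarrow> zeta Q U y = zeta Q' U' y"
  unfolding zeta_def using Tcount_cong[of U U' y] by simp

definition zero_one_seq :: "(nat \<Rightarrow> real) \<Rightarrow> bool" where
  "zero_one_seq Q \<longleftrightarrow> (\<forall>n\<ge>1. Q n \<in> {0, 1})"

lemma zeta_term_bounds:
  assumes "zero_one_seq Q"
  shows "0 \<le> (1/2::real) ^ Tcount U y k * Q (Suc k) * indicator {..y} (U (Suc k))"
    and "(1/2::real) ^ Tcount U y k * Q (Suc k) * indicator {..y} (U (Suc k))
           \<le> (1/2) ^ Tcount U y k * indicator {..y} (U (Suc k))"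
  using assms[unfolded zero_one_seq_def, rule_format, of "Suc k"] by (auto simp: indicator_def)

lemma zeta_summable:
  assumes "zero_one_seq Q"
  shows "summable (\<lambda>k. (1/2::real) ^ Tcount U y k * Q (Suc k) * indicator {..y} (U (Suc k)))"
proof (rule summable_comparison_test'[where N=0])
  show "summable (\<lambda>k. (1/2::real) ^ Tcount U y k * indicator {..y} (U (Suc k)))"
    by (rule summableI_nonneg_bounded[where x=2]) (auto simp: sum_half_power_Tcount)
qed (use zeta_term_bounds[OF assms] in auto)

lemma zeta_nonneg: "zero_one_seq Q \<Longrightarrow> 0 \<le> zeta Q U y"
  unfolding zeta_def by (intro suminf_nonneg zeta_summable zeta_term_bounds)

lemma zeta_le_2:
  assumes "zero_one_seq Q"
  shows "zeta Q U y \<le> 2"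
  unfolding zeta_def
proof (rule suminf_le_const[OF zeta_summable[OF assms]])
  fix N
  have "(\<Sum>k<N. (1/2::real) ^ Tcount U y k * Q (Suc k) * indicator {..y} (U (Suc k)))
      \<le> (\<Sum>k<N. (1/2) ^ Tcount U y k * indicator {..y} (U (Suc k)))"
    by (intro sum_mono zeta_term_bounds(2)[OF assms])
  also have "\<dots> \<le> 2"
    by (simp add: sum_half_power_Tcount)
  finally show "(\<Sum>k<N. (1/2::real) ^ Tcount U y k * Q (Suc k) * indicator {..y} (U (Suc k))) \<le> 2" .
qed

lemma zeta_unfold:
  assumes "zero_one_seq Q"
  shows "zeta Q U y = Q 1 * indicator {..y} (U 1)
     + (1/2) ^ (if U 1 \<le> y then 1 else 0) * zeta (\<lambda>n. Q (Suc n)) (\<lambda>n. U (Suc n)) y"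
proof -
  let ?f = "\<lambda>k. (1/2::real) ^ Tcount U y k * Q (Suc k) * indicator {..y} (U (Suc k))"
  let ?g = "\<lambda>k. (1/2::real) ^ Tcount (\<lambda>n. U (Suc n)) y k * Q (Suc (Suc k)) * indicator {..y} (U (Suc (Suc k)))"
  let ?c = "(1/2::real) ^ (if U 1 \<le> y then 1 else 0)"
  have "suminf ?f = (\<Sum>k. ?f (Suc k)) + ?f 0"
    using suminf_split_head[OF zeta_summable[OF assms]] by simp
  also have "(\<lambda>k. ?f (Suc k)) = (\<lambda>k. ?c * ?g k)"
    by (simp add: fun_eq_iff Tcount_Suc_shift power_add)
  also have "(\<Sum>k. ?c * ?g k) = ?c * suminf ?g"
    using assms by (intro suminf_mult zeta_summable) (auto simp: zero_one_seq_def)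
  finally show ?thesis
    unfolding zeta_def by simp
qed

lemma zeta_measurable:
  assumes "\<And>n. n \<ge> 1 \<Longrightarrow> q n \<in> borel_measurable N"
    and "\<And>n. n \<ge> 1 \<Longrightarrow> u n \<in> borel_measurable N"
  shows "(\<lambda>\<omega>. zeta (\<lambda>n. q n \<omega>) (\<lambda>n. u n \<omega>) y) \<in> borel_measurable N"
proof -
  have [measurable]: "q (Suc k) \<in> borel_measurable N" "u (Suc k) \<in> borel_measurable N" for k
    using assms by auto
  have half_power: "(\<lambda>\<omega>. (1/2::real) ^ Tcount (\<lambda>n. u n \<omega>) y k) \<in> borel_measurable N" for k
    unfolding half_power_Tcount
  proof (rule borel_measurable_prod)
    fix j assume "j \<in> {1..k}"
    then have [measurable]: "u j \<in> borel_measurable N"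
      using assms by auto
    show "(\<lambda>\<omega>. if u j \<omega> \<le> y then 1/2 else 1::real) \<in> borel_measurable N"
      by measurable
  qed
  show ?thesis
    unfolding zeta_def by (intro borel_measurable_suminf borel_measurable_times half_power) measurable
qed

text \<open>With \<open>(q, s) = (Q\<^sub>1, U\<^sub>1 \<le> x)\<close> this is the first step of \<open>(\<zeta>(x), \<zeta>(1))\<close>: the first
  term of the series enters \<open>\<zeta>(1)\<close> always and \<open>\<zeta>(x)\<close> only if \<open>s\<close> holds.\<close>
definition ifs_map :: "real \<Rightarrow> bool \<Rightarrow> real \<times> real \<Rightarrow> real \<times> real" where
  "ifs_map q s p = (if s then q + fst p / 2 else fst p, q + snd p / 2)"

lemma ifs_map_measurable: "ifs_map q s \<in> borel_measurable borel"
  by (cases s) (simp_all add: ifs_map_def[abs_def] borel_measurable_continuous_onI continuous_intros)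

definition zeta_pair :: "real \<Rightarrow> (nat \<Rightarrow> 'w \<Rightarrow> real) \<Rightarrow> (nat \<Rightarrow> 'w \<Rightarrow> real) \<Rightarrow> 'w \<Rightarrow> real \<times> real" where
  "zeta_pair y Q U \<omega> = (zeta (\<lambda>n. Q n \<omega>) (\<lambda>n. U n \<omega>) y, zeta (\<lambda>n. Q n \<omega>) (\<lambda>n. U n \<omega>) 1)"

lemma mu_eq_distr_zeta_pair: "mu M Q U y = distr M borel (zeta_pair y Q U)"
  unfolding mu_def zeta_pair_def[abs_def] ..

lemma zeta_pair_measurable:
  "(\<And>n. n \<ge> 1 \<Longrightarrow> q n \<in> borel_measurable N) \<Longrightarrow> (\<And>n. n \<ge> 1 \<Longrightarrow> u n \<in> borel_measurable N) \<Longrightarrow>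
    zeta_pair y q u \<in> borel_measurable N"
  unfolding zeta_pair_def[abs_def] by (intro borel_measurable_Pair zeta_measurable)

lemma zeta_pair_in_square: "zero_one_seq (\<lambda>n. Q n \<omega>) \<Longrightarrow> zeta_pair y Q U \<omega> \<in> {0..2} \<times> {0..2}"
  by (simp add: zeta_pair_def zeta_nonneg zeta_le_2)

lemma zeta_pair_unfold:
  assumes "zero_one_seq (\<lambda>n. Q n \<omega>)" and "U 1 \<omega> \<le> 1"
  shows "zeta_pair y Q U \<omega> = ifs_map (Q 1 \<omega>) (U 1 \<omega> \<le> y) (zeta_pair y (\<lambda>k. Q (Suc k)) (\<lambda>k. U (Suc k)) \<omega>)"
  using assms zeta_unfold[OF assms(1), of "\<lambda>n. U n \<omega>"]
  by (auto simp: zeta_pair_def ifs_map_def indicator_def)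

section \<open>Self-similarity of the joint law\<close>

definition input_index :: "(nat + nat) set" where
  "input_index = Inl ` {1..} \<union> Inr ` {1..}"

definition input_var :: "(nat \<Rightarrow> 'w \<Rightarrow> real) \<Rightarrow> (nat \<Rightarrow> 'w \<Rightarrow> real) \<Rightarrow> nat + nat \<Rightarrow> 'w \<Rightarrow> real" where
  "input_var Q U i = (case i of Inl k \<Rightarrow> Q k | Inr k \<Rightarrow> U k)"

definition inputs :: "(nat \<Rightarrow> 'w \<Rightarrow> real) \<Rightarrow> (nat \<Rightarrow> 'w \<Rightarrow> real) \<Rightarrow> 'w \<Rightarrow> nat + nat \<Rightarrow> real" where
  "inputs Q U \<omega> = (\<lambda>i\<in>input_index. input_var Q U i \<omega>)"

lemma map_sum_Suc_input_index: "i \<in> input_index \<Longrightarrow> map_sum Suc Suc i \<in> input_index"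
  by (auto simp: input_index_def)

lemma inj_map_sum_Suc: "inj (map_sum Suc Suc)"
  by (simp add: sum.inj_map)

lemma reindex_map_sum_Suc_measurable:
  "(\<lambda>f. \<lambda>i\<in>input_index. f (map_sum Suc Suc i))
     \<in> measurable (PiM input_index (\<lambda>_. borel)) (PiM input_index (\<lambda>_. borel))"
  by (rule measurable_restrict) (auto intro: measurable_component_singleton map_sum_Suc_input_index)

lemma zeta_pair_coords_measurable:
  "zeta_pair y (\<lambda>n f. f (Inl n)) (\<lambda>n f. f (Inr n)) \<in> borel_measurable (PiM input_index (\<lambda>_. borel))"
  by (intro zeta_pair_measurable measurable_component_singleton) (auto simp: input_index_def)

lemma zeta_pair_eq_coords_inputs:
  "zeta_pair y Q U \<omega> = zeta_pair y (\<lambda>n f. f (Inl n)) (\<lambda>n f. f (Inr n)) (inputs Q U \<omega>)"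
  unfolding zeta_pair_def
  by (auto intro!: zeta_cong simp: inputs_def input_index_def input_var_def)

lemma zeta_pair_tail_eq_coords_inputs:
  "zeta_pair y (\<lambda>k. Q (Suc k)) (\<lambda>k. U (Suc k)) \<omega>
     = zeta_pair y (\<lambda>n f. f (Inl n)) (\<lambda>n f. f (Inr n)) (\<lambda>i\<in>input_index. inputs Q U \<omega> (map_sum Suc Suc i))"
  unfolding zeta_pair_def
  by (auto intro!: zeta_cong simp: inputs_def input_index_def input_var_def)

locale input_process = prob_space M for M :: "'w measure" +
  fixes Q U :: "nat \<Rightarrow> 'w \<Rightarrow> real"
  assumes Q_measurable: "\<And>k. k \<ge> 1 \<Longrightarrow> Q k \<in> borel_measurable M"
    and U_measurable: "\<And>k. k \<ge> 1 \<Longrightarrow> U k \<in> borel_measurable M"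
    and indep_inputs: "indep_vars (\<lambda>_. borel) (input_var Q U) input_index"
    and prob_Q_eq_0: "\<And>k. k \<ge> 1 \<Longrightarrow> prob {\<omega> \<in> space M. Q k \<omega> = 0} = 1/2"
    and prob_Q_eq_1: "\<And>k. k \<ge> 1 \<Longrightarrow> prob {\<omega> \<in> space M. Q k \<omega> = 1} = 1/2"
    and U_uniform: "\<And>k. k \<ge> 1 \<Longrightarrow> distributed M lborel (U k) (\<lambda>t. indicator {0..1} t)"
begin

lemma input_var_measurable: "i \<in> input_index \<Longrightarrow> random_variable borel (input_var Q U i)"
  unfolding input_index_def input_var_def using Q_measurable U_measurable by auto

lemma inputs_measurable: "inputs Q U \<in> measurable M (PiM input_index (\<lambda>_. borel))"
  unfolding inputs_def using input_var_measurable by (intro measurable_restrict) auto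

lemma random_variable_zeta_pair: "zeta_pair y Q U \<in> borel_measurable M"
  using Q_measurable U_measurable by (rule zeta_pair_measurable)

lemma random_variable_zeta_pair_tail: "zeta_pair y (\<lambda>k. Q (Suc k)) (\<lambda>k. U (Suc k)) \<in> borel_measurable M"
  using Q_measurable U_measurable by (intro zeta_pair_measurable) auto

lemma prob_Q_vimage:
  assumes k: "k \<ge> 1" and A: "A \<in> sets borel"
  shows "prob (Q k -` A \<inter> space M) = (if 0 \<in> A then 1/2 else 0) + (if 1 \<in> A then 1/2 else 0)"
proof -
  note [measurable] = Q_measurable[OF k]
  define E0 where "E0 = {\<omega> \<in> space M. Q k \<omega> = 0}"
  define E1 where "E1 = {\<omega> \<in> space M. Q k \<omega> = 1}"
  have events: "E0 \<in> events" "E1 \<in> events"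
    unfolding E0_def E1_def by measurable
  have disj: "E0 \<inter> E1 = {}"
    unfolding E0_def E1_def by auto
  have prob_Un: "prob (E0 \<union> E1) = 1"
    using finite_measure_Union[OF events disj] prob_Q_eq_0[OF k] prob_Q_eq_1[OF k]
    by (simp add: E0_def E1_def)
  define G where "G = (if 0 \<in> A then E0 else {}) \<union> (if 1 \<in> A then E1 else {})"
  have "AE \<omega> in M. \<omega> \<in> Q k -` A \<inter> space M \<longleftrightarrow> \<omega> \<in> G"
    using AE_prob_1[OF prob_Un] by eventually_elim (auto simp: G_def E0_def E1_def)
  then have "prob (Q k -` A \<inter> space M) = prob G"
    using events measurable_sets[OF Q_measurable[OF k] A] by (intro measure_eq_AE) (auto simp: G_def)
  also have "\<dots> = (if 0 \<in> A then prob E0 else 0) + (if 1 \<in> A then prob E1 else 0)"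
    using finite_measure_Union[OF events disj] by (simp add: G_def)
  finally show ?thesis
    using prob_Q_eq_0[OF k] prob_Q_eq_1[OF k] by (simp add: E0_def E1_def)
qed

lemma distr_Q_eq: "k \<ge> 1 \<Longrightarrow> distr M borel (Q k) = distr M borel (Q 1)"
  by (rule measure_eqI) (auto simp: emeasure_distr emeasure_eq_measure prob_Q_vimage Q_measurable)

lemma distr_U_eq:
  assumes "k \<ge> 1"
  shows "distr M borel (U k) = density lborel (\<lambda>t. indicator {0..1} t)"
proof -
  have "distr M borel (U k) = distr M lborel (U k)"
    by (rule distr_cong) simp_all
  then show ?thesis
    using distributed_distr_eq_density[OF U_uniform[OF assms]] by simp
qed

lemma prob_U_le:
  assumes k: "k \<ge> 1" and t: "0 \<le> t" "t \<le> 1"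
  shows "prob {\<omega> \<in> space M. U k \<omega> \<le> t} = t"
proof -
  note [measurable] = U_measurable[OF k]
  have "prob {\<omega> \<in> space M. U k \<omega> \<le> t} = measure (distr M borel (U k)) {..t}"
    by (subst measure_distr) (auto intro!: arg_cong[where f=prob])
  also have "\<dots> = enn2real (\<integral>\<^sup>+ s. indicator {0..1} s * indicator {..t} s \<partial>lborel)"
    by (simp add: distr_U_eq[OF k] measure_def emeasure_density)
  also have "(\<integral>\<^sup>+ s. indicator {0..1} s * indicator {..t} s \<partial>lborel) = (\<integral>\<^sup>+ s. indicator {0..t} s \<partial>lborel)"
    using t by (intro nn_integral_cong) (auto simp: indicator_def)
  finally show ?thesis
    using t by simp
qed

lemma prob_U_le_eq:
  assumes k: "k \<ge> 1" and t: "0 \<le> t" "t \<le> 1"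
  shows "prob {\<omega> \<in> space M. (U k \<omega> \<le> t) = s} = (if s then t else 1 - t)"
proof (cases s)
  case False
  note [measurable] = U_measurable[OF k]
  have "{\<omega> \<in> space M. (U k \<omega> \<le> t) = s} = space M - {\<omega> \<in> space M. U k \<omega> \<le> t}"
    using False by auto
  then show ?thesis
    using False prob_compl[of "{\<omega> \<in> space M. U k \<omega> \<le> t}"] prob_U_le[OF assms] by simp
qed (simp add: prob_U_le[OF assms])

lemma AE_zero_one_U_le_1: "AE \<omega> in M. zero_one_seq (\<lambda>n. Q n \<omega>) \<and> (\<forall>n\<ge>1. U n \<omega> \<le> 1)"
proof -
  have "AE \<omega> in M. n \<ge> 1 \<longrightarrow> Q n \<omega> \<in> {0,1} \<and> U n \<omega> \<le> 1" for n
  proof (cases "n \<ge> 1")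
    case True
    note [measurable] = Q_measurable[OF True] U_measurable[OF True]
    have "AE \<omega> in M. \<omega> \<in> Q n -` {0,1} \<inter> space M"
      using prob_Q_vimage[OF True, of "{0,1}"] by (intro AE_prob_1) simp
    moreover have "AE \<omega> in M. \<omega> \<in> {\<omega>\<in>space M. U n \<omega> \<le> 1}"
      using prob_U_le[OF True, of 1] by (intro AE_prob_1) simp
    ultimately show ?thesis
      by eventually_elim auto
  qed simp
  then have "AE \<omega> in M. \<forall>n. n \<ge> 1 \<longrightarrow> Q n \<omega> \<in> {0,1} \<and> U n \<omega> \<le> 1"
    by (subst AE_all_countable) auto
  then show ?thesis
    by eventually_elim (auto simp: zero_one_seq_def)
qed

lemma distr_input_var_shift:
  assumes "i \<in> input_index"
  shows "distr M borel (input_var Q U (map_sum Suc Suc i)) = distr M borel (input_var Q U i)"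
proof -
  obtain k where "k \<ge> 1" "i = Inl k \<or> i = Inr k"
    using assms by (auto simp: input_index_def)
  then show ?thesis
    using distr_Q_eq[of k] distr_Q_eq[of "Suc k"] distr_U_eq[of k] distr_U_eq[of "Suc k"]
    by (auto simp: input_var_def)
qed

lemma distr_inputs:
  "distr M (PiM input_index (\<lambda>_. borel)) (inputs Q U) = PiM input_index (\<lambda>i. distr M borel (input_var Q U i))"
  unfolding inputs_def
  by (rule indep_vars_iff_distr_eq_PiM'[THEN iffD1, OF _ input_var_measurable indep_inputs])
    (auto simp: input_index_def)

text \<open>The law of the inputs is a product measure whose factors are invariant under the shift, and
  reindexing a product measure gives again a product measure.\<close>
lemma distr_tail_inputs:
  "distr M (PiM input_index (\<lambda>_. borel)) (\<lambda>\<omega>. \<lambda>i\<in>input_index. inputs Q U \<omega> (map_sum Suc Suc i))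
     = distr M (PiM input_index (\<lambda>_. borel)) (inputs Q U)"
proof -
  let ?I = input_index
  let ?P = "\<lambda>i. distr M borel (input_var Q U i)"
  let ?shift = "\<lambda>f. \<lambda>i\<in>?I. f (map_sum Suc Suc i)"
  have "distr M (PiM ?I (\<lambda>_. borel)) (\<lambda>\<omega>. ?shift (inputs Q U \<omega>))
      = distr (distr M (PiM ?I (\<lambda>_. borel)) (inputs Q U)) (PiM ?I (\<lambda>_. borel)) ?shift"
    by (rule distr_distr[OF reindex_map_sum_Suc_measurable inputs_measurable, symmetric, unfolded comp_def])
  also have "\<dots> = distr (PiM ?I ?P) (PiM ?I (\<lambda>i. ?P (map_sum Suc Suc i))) ?shift"
    unfolding distr_inputs by (intro distr_cong sets_PiM_cong) auto
  also have "\<dots> = PiM ?I (\<lambda>i. ?P (map_sum Suc Suc i))"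
    by (intro distr_PiM_reindex prob_space_distr input_var_measurable inj_on_subset[OF inj_map_sum_Suc])
      (auto intro: map_sum_Suc_input_index)
  also have "\<dots> = distr M (PiM ?I (\<lambda>_. borel)) (inputs Q U)"
    unfolding distr_inputs by (intro PiM_cong distr_input_var_shift) auto
  finally show ?thesis .
qed

lemma distr_zeta_pair_tail: "distr M borel (zeta_pair y (\<lambda>k. Q (Suc k)) (\<lambda>k. U (Suc k))) = mu M Q U y"
proof -
  let ?\<Phi> = "zeta_pair y (\<lambda>n f. f (Inl n)) (\<lambda>n f. f (Inr n))"
  let ?tail = "\<lambda>\<omega>. \<lambda>i\<in>input_index. inputs Q U \<omega> (map_sum Suc Suc i)"
  have tail_measurable: "?tail \<in> measurable M (PiM input_index (\<lambda>_. borel))"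
    using measurable_compose[OF inputs_measurable reindex_map_sum_Suc_measurable] .
  have "distr M borel (zeta_pair y (\<lambda>k. Q (Suc k)) (\<lambda>k. U (Suc k))) = distr M borel (\<lambda>\<omega>. ?\<Phi> (?tail \<omega>))"
    by (intro arg_cong[where f="distr M borel"] ext zeta_pair_tail_eq_coords_inputs)
  also have "\<dots> = distr (distr M (PiM input_index (\<lambda>_. borel)) ?tail) borel ?\<Phi>"
    by (rule distr_distr[OF zeta_pair_coords_measurable tail_measurable, symmetric, unfolded comp_def])
  also have "\<dots> = distr (distr M (PiM input_index (\<lambda>_. borel)) (inputs Q U)) borel ?\<Phi>"
    unfolding distr_tail_inputs ..
  also have "\<dots> = distr M borel (\<lambda>\<omega>. ?\<Phi> (inputs Q U \<omega>))"
    by (rule distr_distr[OF zeta_pair_coords_measurable inputs_measurable, unfolded comp_def])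
  also have "\<dots> = mu M Q U y"
    unfolding mu_eq_distr_zeta_pair
    by (intro arg_cong[where f="distr M borel"] ext zeta_pair_eq_coords_inputs[symmetric])
  finally show ?thesis .
qed

lemma indep_head_tail:
  "indep_var borel (\<lambda>\<omega>. (Q 1 \<omega>, U 1 \<omega>)) borel (zeta_pair y (\<lambda>k. Q (Suc k)) (\<lambda>k. U (Suc k)))"
proof -
  define A where "A = {Inl 1, Inr 1 :: nat + nat}"
  define B where "B = input_index - A"
  let ?X = "\<lambda>J \<omega>. \<lambda>i\<in>J. input_var Q U i \<omega>"
  let ?head = "\<lambda>f :: nat + nat \<Rightarrow> real. (f (Inl 1), f (Inr 1))"
  let ?tail = "zeta_pair y (\<lambda>n f. f (Inl (Suc n))) (\<lambda>n f. f (Inr (Suc n)))"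
  have "indep_var (PiM A (\<lambda>_. borel)) (?X A) (PiM B (\<lambda>_. borel)) (?X B)"
    by (rule indep_var_restrict[OF indep_inputs]) (auto simp: A_def B_def input_index_def)
  moreover have "?head \<in> borel_measurable (PiM A (\<lambda>_. borel))"
    by (intro borel_measurable_Pair measurable_component_singleton) (auto simp: A_def)
  moreover have "?tail \<in> borel_measurable (PiM B (\<lambda>_. borel))"
    by (intro zeta_pair_measurable measurable_component_singleton) (auto simp: A_def B_def input_index_def)
  ultimately have "indep_var borel (?head \<circ> ?X A) borel (?tail \<circ> ?X B)"
    by (rule indep_var_compose)
  moreover have "?head \<circ> ?X A = (\<lambda>\<omega>. (Q 1 \<omega>, U 1 \<omega>))"
    by (auto simp: A_def input_var_def)
  moreover have "?tail \<circ> ?X B = zeta_pair y (\<lambda>k. Q (Suc k)) (\<lambda>k. U (Suc k))"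
    by (auto intro!: zeta_cong simp: zeta_pair_def fun_eq_iff A_def B_def input_index_def input_var_def)
  ultimately show ?thesis
    by simp
qed

lemma prob_Q1_U1_product:
  assumes "S \<in> sets borel"
  shows "prob {\<omega> \<in> space M. Q 1 \<omega> = q \<and> U 1 \<omega> \<in> S}
           = prob {\<omega> \<in> space M. Q 1 \<omega> = q} * prob {\<omega> \<in> space M. U 1 \<omega> \<in> S}"
proof -
  let ?A = "\<lambda>i::nat+nat. case i of Inl _ \<Rightarrow> {q} | Inr _ \<Rightarrow> S"
  have "prob (\<Inter>i\<in>{Inl 1, Inr 1}. input_var Q U i -` ?A i \<inter> space M)
      = (\<Prod>i\<in>{Inl 1, Inr 1}. prob (input_var Q U i -` ?A i \<inter> space M))"
    by (rule indep_varsD[OF indep_inputs]) (auto simp: input_index_def assms)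
  moreover have "(\<Inter>i\<in>{Inl 1, Inr 1}. input_var Q U i -` ?A i \<inter> space M)
      = {\<omega> \<in> space M. Q 1 \<omega> = q \<and> U 1 \<omega> \<in> S}"
    by (auto simp: input_var_def)
  moreover have "Q 1 -` {q} \<inter> space M = {\<omega> \<in> space M. Q 1 \<omega> = q}"
    and "U 1 -` S \<inter> space M = {\<omega> \<in> space M. U 1 \<omega> \<in> S}"
    by auto
  ultimately show ?thesis
    by (simp add: input_var_def)
qed

lemma prob_first_step:
  assumes q: "q \<in> {0, 1}" and x: "0 \<le> x" "x \<le> 1" and C: "C \<in> sets borel"
  shows "prob {\<omega> \<in> space M. Q 1 \<omega> = q \<and> (U 1 \<omega> \<le> x) = s \<and> zeta_pair x (\<lambda>k. Q (Suc k)) (\<lambda>k. U (Suc k)) \<omega> \<in> C}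
           = 1/2 * (if s then x else 1 - x) * measure (mu M Q U x) C"
proof -
  let ?Z = "zeta_pair x (\<lambda>k. Q (Suc k)) (\<lambda>k. U (Suc k))"
  define S where "S = {u::real. (u \<le> x) = s}"
  have "S = (if s then {..x} else {x<..})"
    by (auto simp: S_def)
  then have S: "S \<in> sets borel"
    by simp
  have "prob {\<omega> \<in> space M. Q 1 \<omega> = q \<and> (U 1 \<omega> \<le> x) = s \<and> ?Z \<omega> \<in> C}
      = prob ((\<lambda>\<omega>. ((Q 1 \<omega>, U 1 \<omega>), ?Z \<omega>)) -` (({q} \<times> S) \<times> C) \<inter> space M)"
    by (auto simp: S_def intro!: arg_cong[where f=prob])
  also have "\<dots> = prob ((\<lambda>\<omega>. (Q 1 \<omega>, U 1 \<omega>)) -` ({q} \<times> S) \<inter> space M) * prob (?Z -` C \<inter> space M)"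
    using S C by (intro indep_varD[OF indep_head_tail] borel_Times) auto
  also have "(\<lambda>\<omega>. (Q 1 \<omega>, U 1 \<omega>)) -` ({q} \<times> S) \<inter> space M = {\<omega> \<in> space M. Q 1 \<omega> = q \<and> U 1 \<omega> \<in> S}"
    by auto
  also have "prob (?Z -` C \<inter> space M) = measure (mu M Q U x) C"
    unfolding distr_zeta_pair_tail[symmetric] using C by (simp add: measure_distr random_variable_zeta_pair_tail)
  finally show ?thesis
    using q x prob_Q1_U1_product[OF S, of q] prob_Q_eq_0[of 1] prob_Q_eq_1[of 1] prob_U_le_eq[of 1 x s]
    by (auto simp: S_def)
qed

lemma mu_self_similar:
  assumes x: "0 \<le> x" "x \<le> 1" and B: "B \<in> sets borel"
  shows "measure (mu M Q U x) B = (\<Sum>q\<in>{0,1}. x/2 * measure (mu M Q U x) (ifs_map q True -` B)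
            + (1-x)/2 * measure (mu M Q U x) (ifs_map q False -` B))"
proof -
  let ?Z = "zeta_pair x (\<lambda>k. Q (Suc k)) (\<lambda>k. U (Suc k))"
  define E where "E = (\<lambda>(q, s). {\<omega> \<in> space M. Q 1 \<omega> = q \<and> (U 1 \<omega> \<le> x) = s \<and> ?Z \<omega> \<in> ifs_map q s -` B})"
  have vimage_B: "ifs_map q s -` B \<in> sets borel" for q s
    using measurable_sets[OF ifs_map_measurable B] by simp
  note [measurable] = random_variable_zeta_pair random_variable_zeta_pair_tail Q_measurable[OF le_refl]
    U_measurable[OF le_refl] ifs_map_measurable B
  have "E (q, s) \<in> events" for q s
    unfolding E_def prod.case by measurable
  then have events: "E ` ({0,1} \<times> UNIV) \<subseteq> events"
    by auto
  have "measure (mu M Q U x) B = prob {\<omega> \<in> space M. zeta_pair x Q U \<omega> \<in> B}"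
    unfolding mu_eq_distr_zeta_pair by (simp add: measure_distr vimage_def Int_def conj_commute)
  also have "\<dots> = prob (\<Union>p\<in>{0,1} \<times> UNIV. E p)"
  proof (rule measure_eq_AE)
    show "AE \<omega> in M. \<omega> \<in> {\<omega> \<in> space M. zeta_pair x Q U \<omega> \<in> B} \<longleftrightarrow> \<omega> \<in> (\<Union>p\<in>{0,1} \<times> UNIV. E p)"
      using AE_zero_one_U_le_1
    proof eventually_elim
      case (elim \<omega>)
      then have "Q 1 \<omega> \<in> {0, 1}"
        by (simp add: zero_one_seq_def)
      then show ?case
        using elim zeta_pair_unfold[of Q \<omega> U x] by (auto simp: E_def)
    qed
  qed (use events in auto)
  also have "\<dots> = (\<Sum>p\<in>{0,1} \<times> UNIV. prob (E p))"
    by (intro finite_measure_finite_Union events) (auto simp: disjoint_family_on_def E_def)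
  also have "\<dots> = (\<Sum>q\<in>{0,1}. \<Sum>s\<in>UNIV. 1/2 * (if s then x else 1 - x) * measure (mu M Q U x) (ifs_map q s -` B))"
  proof (unfold sum.cartesian_product, intro sum.cong refl, clarify)
    fix q s assume "q \<in> {0::real, 1}"
    then show "prob (E (q, s)) = 1/2 * (if s then x else 1 - x) * measure (mu M Q U x) (ifs_map q s -` B)"
      unfolding E_def prod.case using x vimage_B by (rule prob_first_step)
  qed
  finally show ?thesis
    by (simp add: UNIV_bool algebra_simps)
qed

lemma prob_space_mu: "prob_space (mu M Q U y)"
  unfolding mu_eq_distr_zeta_pair by (rule prob_space_distr[OF random_variable_zeta_pair])

lemma sets_mu: "sets (mu M Q U y) = sets borel"
  unfolding mu_eq_distr_zeta_pair by simp

lemma mu_square: "measure (mu M Q U y) ({0..2} \<times> {0..2}) = 1"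
proof -
  note [measurable] = random_variable_zeta_pair
  have square: "({0..2} \<times> {0..2} :: (real \<times> real) set) \<in> sets borel"
    by (intro borel_closed closed_Times closed_atLeastAtMost)
  have "AE \<omega> in M. zeta_pair y Q U \<omega> \<in> {0..2} \<times> {0..2}"
    using AE_zero_one_U_le_1 by eventually_elim (auto intro: zeta_pair_in_square)
  then have "prob {\<omega> \<in> space M. zeta_pair y Q U \<omega> \<in> {0..2} \<times> {0..2}} = 1"
    using square by (subst prob_Collect_eq_1) auto
  then show ?thesis
    unfolding mu_eq_distr_zeta_pair using square by (simp add: measure_distr vimage_def Int_def conj_commute)
qed

end

section \<open>Measures invariant under the iterated function system\<close>

lemma (in prob_space) prob_eq_0_if_disjoint_prob_1:
  assumes "S \<in> events" "prob S = 1" "B \<in> events" "B \<inter> S = {}"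
  shows "prob B = 0"
proof -
  have "prob B + prob S \<le> 1"
    using finite_measure_Union[of B S] prob_le_1[of "B \<union> S"] assms by simp
  then show ?thesis
    using assms(2) measure_nonneg[of M B] by linarith
qed

definition dyadic :: "nat \<Rightarrow> int \<Rightarrow> real set" where
  "dyadic l k = {2 * of_int k * (1/2)^l ..< 2 * (of_int k + 1) * (1/2)^l}"

lemma dyadic_borel [simp]: "dyadic l k \<in> sets borel"
  by (simp add: dyadic_def)

lemma dyadic_eq: "dyadic l k = {of_int k * (2 * (1/2)^l) ..< of_int (k + 1) * (2 * (1/2)^l)}"
  by (simp add: dyadic_def algebra_simps)

lemma vimage_half_dyadic: "(\<lambda>y. y/2) -` dyadic (Suc l) k = dyadic l k"
  by (auto simp: dyadic_def field_simps)

lemma two_power_mult_half_power: "(2::real)^l * (1/2)^l = 1"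
  by (simp add: power_mult_distrib[symmetric])

lemma vimage_one_plus_half_dyadic: "(\<lambda>y. 1 + y/2) -` dyadic (Suc l) k = dyadic l (k - 2^l)"
proof -
  have "2 * of_int (k - 2^l) * (1/2::real)^l = 2 * of_int k * (1/2)^l - 2"
    and "2 * (of_int (k - 2^l) + 1) * (1/2::real)^l = 2 * (of_int k + 1) * (1/2)^l - 2"
    using two_power_mult_half_power[of l] by (simp_all add: algebra_simps)
  then show ?thesis
    unfolding dyadic_def by (auto simp: field_simps)
qed

lemma dyadic_subset_neg: "k < 0 \<Longrightarrow> dyadic l k \<subseteq> {..<0}"
proof
  fix y assume "k < 0" and y: "y \<in> dyadic l k"
  then have "of_int k + 1 \<le> (0::real)"
    by linarith
  then have "2 * (of_int k + 1) * (1/2::real)^l \<le> 0"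
    by (simp add: mult_nonpos_nonneg)
  then show "y \<in> {..<0}"
    using y by (auto simp: dyadic_def)
qed

lemma dyadic_subset_ge_2: "k \<ge> 2^l \<Longrightarrow> dyadic l k \<subseteq> {2..}"
proof
  fix y assume k: "k \<ge> 2^l" and y: "y \<in> dyadic l k"
  have "(2::real) = 2 * 2^l * (1/2)^l"
    using two_power_mult_half_power[of l] by simp
  also have "\<dots> \<le> 2 * of_int k * (1/2)^l"
    using k by (intro mult_right_mono mult_left_mono) auto
  finally show "y \<in> {2..}"
    using y by (auto simp: dyadic_def)
qed

lemma mem_dyadic_neighbours:
  assumes "\<bar>t - c\<bar> \<le> 2 * (1/2)^l"
  shows "\<exists>d\<in>{-1, 0, 1}. t \<in> dyadic l (\<lfloor>c / (2 * (1/2)^l)\<rfloor> + d)"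
proof -
  define w :: real where "w = 2 * (1/2)^l"
  define k where "k = \<lfloor>c / w\<rfloor>"
  have "of_int k \<le> c / w" "c / w < of_int k + 1"
    by (simp_all add: k_def)
  then have "of_int k * w \<le> c" "c < (of_int k + 1) * w"
    by (simp_all add: w_def pos_le_divide_eq pos_divide_less_eq)
  then show ?thesis
    using assms unfolding dyadic_eq w_def[symmetric] k_def[symmetric] by (auto simp: algebra_simps abs_le_iff)
qed

lemma vimage_half_affine_borel: "B \<in> sets borel \<Longrightarrow> (\<lambda>y::real. c + y/2) -` B \<in> sets borel"
  using measurable_sets[of "\<lambda>y::real. c + y/2" borel borel B]
  by (simp add: borel_measurable_continuous_onI continuous_intros)

text \<open>Stated in simp normal form: \<open>2 * (1/2)^Suc l\<close> simplifies to \<open>(1/2)^l\<close>.\<close>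
lemma vimage_half_initial_interval: "(\<lambda>y. y/2) -` {0..(1/2::real)^l} = {0..2 * (1/2)^l}"
  by (auto simp: field_simps)

text \<open>These conditions force the uniform distribution on \<open>[0, 2]\<close>; only the two bounds below
  are needed.\<close>
locale halving_invariant = prob_space \<rho> for \<rho> :: "real measure" +
  assumes sets_eq_borel: "sets \<rho> = sets borel"
    and support: "measure \<rho> {0..2} = 1"
    and halving: "\<And>B. B \<in> sets borel \<Longrightarrow>
      measure \<rho> B = (measure \<rho> ((\<lambda>y. y/2) -` B) + measure \<rho> ((\<lambda>y. 1 + y/2) -` B)) / 2"
begin

lemma measure_eq_0_outside: "B \<in> sets borel \<Longrightarrow> B \<inter> {0..2} = {} \<Longrightarrow> measure \<rho> B = 0"
  by (intro prob_eq_0_if_disjoint_prob_1[OF _ support]) (auto simp: sets_eq_borel)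

lemma measure_singleton_2: "measure \<rho> {2} = 0"
  using halving[of "{2}"] measure_eq_0_outside[of "{4}"]
  by (simp add: vimage_def field_simps)

lemma measure_eq_0_outside_half_open:
  assumes B: "B \<in> sets borel" and disj: "B \<inter> {0..<2} = {}"
  shows "measure \<rho> B = 0"
proof -
  have "measure \<rho> B \<le> measure \<rho> ((B - {2}) \<union> {2})"
    using B by (intro finite_measure_mono) (auto simp: sets_eq_borel)
  also have "\<dots> \<le> measure \<rho> (B - {2}) + measure \<rho> {2}"
    using B by (intro measure_Un_le) (auto simp: sets_eq_borel)
  also have "measure \<rho> (B - {2}) = 0"
    using B disj by (intro measure_eq_0_outside) auto
  finally show ?thesis
    using measure_singleton_2 measure_nonneg[of \<rho> B] by simp
qed

lemma measure_dyadic_le: "measure \<rho> (dyadic l k) \<le> (1/2)^l"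
proof (induction l arbitrary: k)
  case 0
  show ?case
    by simp
next
  case (Suc l)
  have halves: "measure \<rho> (dyadic (Suc l) k) = (measure \<rho> (dyadic l k) + measure \<rho> (dyadic l (k - 2^l))) / 2"
    using halving[of "dyadic (Suc l) k"] by (simp add: vimage_half_dyadic vimage_one_plus_half_dyadic)
  show ?case
  proof (cases "k < 2^l")
    case True
    then have "measure \<rho> (dyadic l (k - 2^l)) = 0"
      using dyadic_subset_neg[of "k - 2^l" l] by (intro measure_eq_0_outside_half_open) auto
    then show ?thesis
      using halves Suc.IH[of k] by simp
  next
    case False
    then have "measure \<rho> (dyadic l k) = 0"
      using dyadic_subset_ge_2[of l k] by (intro measure_eq_0_outside_half_open) auto
    then show ?thesis
      using halves Suc.IH[of "k - 2^l"] by simp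
  qed
qed

lemma measure_initial_interval_ge: "(1/2)^l \<le> measure \<rho> {0..2 * (1/2)^l}"
proof (induction l)
  case 0
  show ?case
    using support by simp
next
  case (Suc l)
  have "(\<lambda>y. y/2) -` {0..2 * (1/2::real)^Suc l} = {0..2 * (1/2)^l}"
    by (auto simp: field_simps)
  then show ?case
    using halving[of "{0..2 * (1/2)^Suc l}"] Suc.IH by (simp add: add_increasing2)
qed

end

lemma vimage_ifs_map_True_Times: "ifs_map q True -` (A \<times> B) = ((\<lambda>y. q + y/2) -` A) \<times> ((\<lambda>y. q + y/2) -` B)"
  by (auto simp: ifs_map_def)

lemma vimage_ifs_map_False_Times: "ifs_map q False -` (A \<times> B) = A \<times> ((\<lambda>y. q + y/2) -` B)"
  by (auto simp: ifs_map_def)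

locale ifs_invariant = prob_space \<nu> for \<nu> :: "(real \<times> real) measure" +
  fixes x :: real
  assumes sets_eq_borel: "sets \<nu> = sets borel"
    and x_gt_0: "0 < x" and x_lt_1: "x < 1"
    and support: "measure \<nu> ({0..2} \<times> {0..2}) = 1"
    and invariant: "\<And>B. B \<in> sets borel \<Longrightarrow> measure \<nu> B = (\<Sum>q\<in>{0,1}. x/2 * measure \<nu> (ifs_map q True -` B)
            + (1-x)/2 * measure \<nu> (ifs_map q False -` B))"
begin

lemma measure_mono_borel: "A \<subseteq> B \<Longrightarrow> B \<in> sets borel \<Longrightarrow> measure \<nu> A \<le> measure \<nu> B"
  by (rule finite_measure_mono) (auto simp: sets_eq_borel)

lemma space_eq_UNIV: "space \<nu> = UNIV"
  using sets_eq_imp_space_eq[OF sets_eq_borel] by simp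

lemma halving_invariant_distrI:
  assumes proj_borel: "proj \<in> borel_measurable borel"
    and square: "{0..2} \<times> {0..2} \<subseteq> proj -` {0..2}"
    and halving: "\<And>B. B \<in> sets borel \<Longrightarrow> measure \<nu> (proj -` B)
      = (measure \<nu> (proj -` ((\<lambda>y. y/2) -` B)) + measure \<nu> (proj -` ((\<lambda>y. 1 + y/2) -` B))) / 2"
  shows "halving_invariant (distr \<nu> borel proj)"
proof -
  have proj_measurable: "proj \<in> borel_measurable \<nu>"
    using proj_borel by (simp add: measurable_cong_sets[OF sets_eq_borel refl])
  have measure_distr_proj: "measure (distr \<nu> borel proj) B = measure \<nu> (proj -` B)" if "B \<in> sets borel" for B
    using that by (simp add: measure_distr[OF proj_measurable] space_eq_UNIV)
  have vimage_proj: "proj -` B \<in> sets borel" if "B \<in> sets borel" for B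
    using measurable_sets[OF proj_borel that] by simp
  show ?thesis
  proof (intro halving_invariant.intro halving_invariant_axioms.intro prob_space_distr[OF proj_measurable])
    show "sets (distr \<nu> borel proj) = sets borel"
      by simp
    have "1 \<le> measure \<nu> (proj -` {0..2})"
      using support measure_mono_borel[OF square] vimage_proj by auto
    then show "measure (distr \<nu> borel proj) {0..2} = 1"
      using prob_le_1[of "proj -` {0..2}"] by (simp add: measure_distr_proj)
  next
    fix B :: "real set" assume B: "B \<in> sets borel"
    then show "measure (distr \<nu> borel proj) B = (measure (distr \<nu> borel proj) ((\<lambda>y. y/2) -` B)
        + measure (distr \<nu> borel proj) ((\<lambda>y. 1 + y/2) -` B)) / 2"
      using halving[OF B] vimage_half_affine_borel[OF B, of 0] vimage_half_affine_borel[OF B, of 1]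
      by (simp add: measure_distr_proj)
  qed
qed

lemma halving_invariant_fst: "halving_invariant (distr \<nu> borel fst)"
proof (rule halving_invariant_distrI)
  fix B :: "real set" assume B: "B \<in> sets borel"
  have vimage_fst: "fst -` C = C \<times> UNIV" for C :: "real set"
    by auto
  have "measure \<nu> (B \<times> UNIV) = x/2 * (measure \<nu> ((\<lambda>y. y/2) -` B \<times> UNIV)
      + measure \<nu> ((\<lambda>y. 1 + y/2) -` B \<times> UNIV)) + (1 - x) * measure \<nu> (B \<times> UNIV)"
    using invariant[of "B \<times> UNIV"] B
    by (simp add: vimage_ifs_map_True_Times vimage_ifs_map_False_Times borel_Times algebra_simps)
  then have "x * measure \<nu> (B \<times> UNIV) = x * ((measure \<nu> ((\<lambda>y. y/2) -` B \<times> UNIV)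
      + measure \<nu> ((\<lambda>y. 1 + y/2) -` B \<times> UNIV)) / 2)"
    by (simp add: algebra_simps)
  then show "measure \<nu> (fst -` B) = (measure \<nu> (fst -` ((\<lambda>y. y/2) -` B))
      + measure \<nu> (fst -` ((\<lambda>y. 1 + y/2) -` B))) / 2"
    unfolding vimage_fst using x_gt_0 by simp
qed (auto simp flip: borel_prod)

lemma halving_invariant_snd: "halving_invariant (distr \<nu> borel snd)"
proof (rule halving_invariant_distrI)
  fix B :: "real set" assume B: "B \<in> sets borel"
  have vimage_snd: "snd -` C = UNIV \<times> C" for C :: "real set"
    by auto
  show "measure \<nu> (snd -` B) = (measure \<nu> (snd -` ((\<lambda>y. y/2) -` B))
      + measure \<nu> (snd -` ((\<lambda>y. 1 + y/2) -` B))) / 2"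
    unfolding vimage_snd using invariant[of "UNIV \<times> B"] B
    by (simp add: vimage_ifs_map_True_Times vimage_ifs_map_False_Times borel_Times field_simps)
qed (auto simp flip: borel_prod)

lemma measure_distr_fst: "B \<in> sets borel \<Longrightarrow> measure (distr \<nu> borel fst) B = measure \<nu> (B \<times> UNIV)"
  by (subst measure_distr)
    (auto simp: space_eq_UNIV measurable_cong_sets[OF sets_eq_borel refl] simp flip: borel_prod
      intro!: arg_cong[where f="measure \<nu>"])

lemma measure_distr_snd: "B \<in> sets borel \<Longrightarrow> measure (distr \<nu> borel snd) B = measure \<nu> (UNIV \<times> B)"
  by (subst measure_distr)
    (auto simp: space_eq_UNIV measurable_cong_sets[OF sets_eq_borel refl] simp flip: borel_prod
      intro!: arg_cong[where f="measure \<nu>"])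

lemma measure_Times_eq_0_outside:
  assumes "A \<in> sets borel" "C \<in> sets borel" "C \<inter> {0..<2} = {}"
  shows "measure \<nu> (A \<times> C) = 0"
proof -
  interpret snd_marginal: halving_invariant "distr \<nu> borel snd"
    by (rule halving_invariant_snd)
  have "measure \<nu> (A \<times> C) \<le> measure \<nu> (UNIV \<times> C)"
    using assms by (intro measure_mono_borel borel_Times) auto
  also have "\<dots> = 0"
    using assms snd_marginal.measure_eq_0_outside_half_open[of C] by (simp add: measure_distr_snd)
  finally show ?thesis
    using measure_nonneg[of \<nu> "A \<times> C"] by linarith
qed

lemma measure_Times_dyadic_eq_one_branch:
  assumes A: "A \<in> sets borel"
  obtains q j' where "q \<in> {0, 1}"
    "measure \<nu> (A \<times> dyadic (Suc b) j)
       = x/2 * measure \<nu> ((\<lambda>y. q + y/2) -` A \<times> dyadic b j') + (1-x)/2 * measure \<nu> (A \<times> dyadic b j')"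
proof -
  have vimage_A: "(\<lambda>y. c + y/2) -` A \<in> sets borel" for c
    using A by (rule vimage_half_affine_borel)
  have split: "measure \<nu> (A \<times> dyadic (Suc b) j)
      = (x/2 * measure \<nu> ((\<lambda>y. 0 + y/2) -` A \<times> dyadic b j) + (1-x)/2 * measure \<nu> (A \<times> dyadic b j))
      + (x/2 * measure \<nu> ((\<lambda>y. 1 + y/2) -` A \<times> dyadic b (j - 2^b))
         + (1-x)/2 * measure \<nu> (A \<times> dyadic b (j - 2^b)))"
    using invariant[of "A \<times> dyadic (Suc b) j"] A
    by (simp add: borel_Times vimage_ifs_map_True_Times vimage_ifs_map_False_Times
        vimage_half_dyadic vimage_one_plus_half_dyadic)
  show ?thesis
  proof (cases "j < 2^b")
    case True
    then have "dyadic b (j - 2^b) \<inter> {0..<2} = {}"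
      using dyadic_subset_neg[of "j - 2^b" b] by auto
    then have "measure \<nu> ((\<lambda>y. 1 + y/2) -` A \<times> dyadic b (j - 2^b)) = 0"
      and "measure \<nu> (A \<times> dyadic b (j - 2^b)) = 0"
      using A vimage_A by (auto intro: measure_Times_eq_0_outside)
    then show ?thesis
      using split by (intro that[of 0 j]) simp_all
  next
    case False
    then have "dyadic b j \<inter> {0..<2} = {}"
      using dyadic_subset_ge_2[of b j] by auto
    then have "measure \<nu> ((\<lambda>y. 0 + y/2) -` A \<times> dyadic b j) = 0"
      and "measure \<nu> (A \<times> dyadic b j) = 0"
      using A vimage_A[of 0] by (auto intro: measure_Times_eq_0_outside)
    then show ?thesis
      using split by (intro that[of 1 "j - 2^b"]) simp_all
  qed
qed

lemma measure_dyadic_Times_le: "A \<in> sets borel \<Longrightarrow> measure \<nu> (dyadic a k \<times> A) \<le> (1/2)^a"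
proof -
  interpret fst_marginal: halving_invariant "distr \<nu> borel fst"
    by (rule halving_invariant_fst)
  assume "A \<in> sets borel"
  then have "measure \<nu> (dyadic a k \<times> A) \<le> measure \<nu> (dyadic a k \<times> UNIV)"
    by (intro measure_mono_borel borel_Times) auto
  also have "\<dots> \<le> (1/2)^a"
    using fst_marginal.measure_dyadic_le[of a k] by (simp add: measure_distr_fst)
  finally show ?thesis .
qed

lemma measure_Times_dyadic_le: "A \<in> sets borel \<Longrightarrow> measure \<nu> (A \<times> dyadic b j) \<le> (1/2)^b"
proof -
  interpret snd_marginal: halving_invariant "distr \<nu> borel snd"
    by (rule halving_invariant_snd)
  assume "A \<in> sets borel"
  then have "measure \<nu> (A \<times> dyadic b j) \<le> measure \<nu> (UNIV \<times> dyadic b j)"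
    by (intro measure_mono_borel borel_Times) auto
  also have "\<dots> \<le> (1/2)^b"
    using snd_marginal.measure_dyadic_le[of b j] by (simp add: measure_distr_snd)
  finally show ?thesis .
qed

lemma measure_dyadic_rect_le: "measure \<nu> (dyadic a k \<times> dyadic b j) \<le> (1/2)^a * ((1+x)/2)^b"
proof (induction b arbitrary: a k j)
  case 0
  show ?case
    using measure_dyadic_Times_le[of "dyadic 0 j" a k] by simp
next
  case (Suc b)
  let ?\<beta> = "(1+x)/2"
  have branch: "measure \<nu> ((\<lambda>y. q + y/2) -` dyadic a k \<times> dyadic b j') \<le> 2 * (1/2)^a * ?\<beta>^b"
    if q: "q \<in> {0, 1}" for q j'
  proof (cases a)
    case 0
    have "measure \<nu> ((\<lambda>y. q + y/2) -` dyadic a k \<times> dyadic b j') \<le> (1/2)^b"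
      by (intro measure_Times_dyadic_le vimage_half_affine_borel) simp
    also have "\<dots> \<le> ?\<beta>^b"
      using x_gt_0 by (intro power_mono) auto
    also have "\<dots> \<le> 2 * (1/2)^a * ?\<beta>^b"
      using 0 x_gt_0 by simp
    finally show ?thesis .
  next
    case (Suc a')
    have "(\<lambda>y. q + y/2) -` dyadic a k = dyadic a' (if q = 0 then k else k - 2^a')"
      using q Suc vimage_half_dyadic[of a' k] vimage_one_plus_half_dyadic[of a' k] by auto
    then show ?thesis
      using Suc.IH[of a' _ j'] Suc by simp
  qed
  obtain q j' where q: "q \<in> {0, 1}" and one_branch:
    "measure \<nu> (dyadic a k \<times> dyadic (Suc b) j)
       = x/2 * measure \<nu> ((\<lambda>y. q + y/2) -` dyadic a k \<times> dyadic b j') + (1-x)/2 * measure \<nu> (dyadic a k \<times> dyadic b j')"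
    using measure_Times_dyadic_eq_one_branch[of "dyadic a k" b j] by auto
  have "measure \<nu> (dyadic a k \<times> dyadic (Suc b) j)
      \<le> x/2 * (2 * (1/2)^a * ?\<beta>^b) + (1-x)/2 * ((1/2)^a * ?\<beta>^b)"
    unfolding one_branch using branch[OF q, of j'] Suc.IH[of a k j'] x_gt_0 x_lt_1
    by (intro add_mono mult_left_mono) auto
  also have "\<dots> = (1/2)^a * ?\<beta>^Suc b"
    by (simp add: field_simps)
  finally show ?case .
qed

lemma measure_initial_rect_ge:
  "b \<le> a \<Longrightarrow> (1/2)^a * ((1+x)/2)^b \<le> measure \<nu> ({0..2 * (1/2)^a} \<times> {0..2 * (1/2)^b})"
proof (induction b arbitrary: a)
  case 0
  interpret fst_marginal: halving_invariant "distr \<nu> borel fst"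
    by (rule halving_invariant_fst)
  let ?I = "{0..2 * (1/2::real)^a}"
  have "(1/2)^a \<le> measure \<nu> (?I \<times> UNIV)"
    using fst_marginal.measure_initial_interval_ge[of a] by (simp add: measure_distr_fst)
  also have "\<dots> \<le> measure \<nu> (?I \<times> {0..2} \<union> ?I \<times> - {0..2})"
    by (intro measure_mono_borel sets.Un borel_Times) auto
  also have "\<dots> \<le> measure \<nu> (?I \<times> {0..2}) + measure \<nu> (?I \<times> - {0..2})"
    by (intro measure_Un_le) (auto simp: sets_eq_borel intro: borel_Times)
  also have "measure \<nu> (?I \<times> - {0..2}) = 0"
    by (intro measure_Times_eq_0_outside) auto
  finally show ?case
    by simp
next
  case (Suc b)
  then obtain a' where a: "a = Suc a'"
    by (cases a) auto
  let ?\<beta> = "(1+x)/2"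
  let ?R = "{0..2 * (1/2::real)^a} \<times> {0..2 * (1/2::real)^Suc b}"
  have expansion: "measure \<nu> ?R = (x/2 * measure \<nu> ({0..2 * (1/2)^a'} \<times> {0..2 * (1/2)^b})
      + (1-x)/2 * measure \<nu> ({0..2 * (1/2)^a} \<times> {0..2 * (1/2)^b}))
      + (x/2 * measure \<nu> (ifs_map 1 True -` ?R) + (1-x)/2 * measure \<nu> (ifs_map 1 False -` ?R))"
    using invariant[of ?R] a
    by (simp add: borel_Times vimage_ifs_map_True_Times vimage_ifs_map_False_Times vimage_half_initial_interval)
  have "(1/2)^a * ?\<beta>^Suc b = x/2 * ((1/2)^a' * ?\<beta>^b) + (1-x)/2 * ((1/2)^a * ?\<beta>^b)"
    using a by (simp add: field_simps)
  also have "\<dots> \<le> x/2 * measure \<nu> ({0..2 * (1/2)^a'} \<times> {0..2 * (1/2)^b})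
      + (1-x)/2 * measure \<nu> ({0..2 * (1/2)^a} \<times> {0..2 * (1/2)^b})"
    using Suc.IH[of a'] Suc.IH[of a] Suc.prems a x_gt_0 x_lt_1 by (intro add_mono mult_left_mono) auto
  also have "\<dots> \<le> measure \<nu> ?R"
  proof -
    have "0 \<le> x/2 * measure \<nu> (ifs_map 1 True -` ?R) + (1-x)/2 * measure \<nu> (ifs_map 1 False -` ?R)"
      using x_gt_0 x_lt_1 by (intro add_nonneg_nonneg mult_nonneg_nonneg) auto
    then show ?thesis
      unfolding expansion by linarith
  qed
  finally show ?case .
qed

lemma measure_vimage_ifs_map_le:
  assumes "q \<in> {0, 1}" "B \<in> sets borel"
  shows "min (x/2) ((1-x)/2) * measure \<nu> (ifs_map q s -` B) \<le> measure \<nu> B"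
proof -
  have "min (x/2) ((1-x)/2) * measure \<nu> (ifs_map q s -` B) \<le> (if s then x/2 else (1-x)/2) * measure \<nu> (ifs_map q s -` B)"
    by (intro mult_right_mono) (auto simp: min_def)
  also have "\<dots> \<le> measure \<nu> B"
    using invariant[OF assms(2)] assms(1) x_gt_0 x_lt_1 by (cases s) auto
  finally show ?thesis .
qed

end

section \<open>Local dimension\<close>

primrec ifs_word :: "(real \<times> bool) list \<Rightarrow> real \<times> real \<Rightarrow> real \<times> real" where
  "ifs_word [] p = p"
| "ifs_word (d # w) p = ifs_map (fst d) (snd d) (ifs_word w p)"

lemma ifs_word_append: "ifs_word (u @ v) p = ifs_word u (ifs_word v p)"
  by (induction u) auto

lemma ifs_word_measurable: "ifs_word w \<in> borel_measurable borel"
proof (induction w)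
  case (Cons d w)
  have "ifs_word (d # w) = ifs_map (fst d) (snd d) \<circ> ifs_word w"
    by (simp add: fun_eq_iff)
  show ?case
    unfolding \<open>ifs_word (d # w) = _\<close> by (rule measurable_comp[OF Cons.IH ifs_map_measurable])
qed (simp add: id_def[symmetric])

lemma dist_ifs_map_le: "dist (ifs_map q s p) (ifs_map q s p') \<le> dist p p'"
proof -
  obtain a b a' b' where p: "p = (a, b)" "p' = (a', b')"
    by (cases p, cases p')
  have "dist (if s then q + a/2 else a) (if s then q + a'/2 else a') \<le> dist a a'"
    and "dist (q + b/2) (q + b'/2) \<le> dist b b'"
    by (auto simp: dist_real_def)
  then show ?thesis
    unfolding p ifs_map_def by (auto simp: dist_Pair_Pair intro!: real_sqrt_le_mono add_mono power_mono)
qed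

lemma dist_ifs_word_le: "dist (ifs_word w p) (ifs_word w p') \<le> dist p p'"
  by (induction w) (auto intro: order_trans[OF dist_ifs_map_le])

lemma sum_half_powers_Cons:
  "(\<Sum>j<length (d # w). f ((d # w) ! j) * (1/2::real)^j) = f d + (\<Sum>j<length w. f (w ! j) * (1/2)^j) / 2"
  by (simp add: sum.lessThan_Suc_shift sum_divide_distrib del: sum.lessThan_Suc)

lemma snd_ifs_word:
  "snd (ifs_word w p) = (\<Sum>j<length w. fst (w ! j) * (1/2)^j) + (1/2)^length w * snd p"
  by (induction w) (simp_all only: sum_half_powers_Cons, simp_all add: ifs_map_def field_simps)

lemma fst_ifs_word_all_True:
  "\<forall>d\<in>set w. snd d \<Longrightarrow> fst (ifs_word w p) = (\<Sum>j<length w. fst (w ! j) * (1/2)^j) + (1/2)^length w * fst p"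
  by (induction w) (simp_all only: sum_half_powers_Cons, simp_all add: ifs_map_def field_simps)

lemma fst_ifs_word_all_False: "\<forall>d\<in>set w. \<not> snd d \<Longrightarrow> fst (ifs_word w p) = fst p"
  by (induction w) (auto simp: ifs_map_def)

lemma ifs_word_window:
  fixes g :: "nat \<Rightarrow> real"
  assumes "i + m \<le> n"
  shows "ifs_word (map (\<lambda>k. (g k, i < k \<and> k \<le> i + m)) [1..<n+1]) (0, 0)
           = ((\<Sum>j<m. g (i + Suc j) * (1/2)^j), (\<Sum>j<n. g (Suc j) * (1/2)^j))"
proof -
  let ?d = "\<lambda>k. (g k, i < k \<and> k \<le> i + m)"
  define w1 where "w1 = map ?d [1..<i+1]"
  define w2 where "w2 = map ?d [i+1..<i+m+1]"
  define w3 where "w3 = map ?d [i+m+1..<n+1]"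
  have upt_split: "[a..<c] = [a..<b] @ [b..<c]" if "a \<le> b" "b \<le> c" for a b c
    using upt_add_eq_append[of a b "c - b"] that by simp
  have "map ?d [1..<n+1] = w1 @ w2 @ w3"
    unfolding w1_def w2_def w3_def map_append[symmetric]
    using assms upt_split[of 1 "i+1" "n+1"] upt_split[of "i+1" "i+m+1" "n+1"] by simp
  moreover have "\<forall>d\<in>set w1. \<not> snd d" "\<forall>d\<in>set w2. snd d" "\<forall>d\<in>set w3. \<not> snd d"
    by (auto simp: w1_def w2_def w3_def)
  ultimately have "fst (ifs_word (map ?d [1..<n+1]) (0, 0)) = (\<Sum>j<length w2. fst (w2 ! j) * (1/2)^j)"
    by (simp add: ifs_word_append fst_ifs_word_all_False fst_ifs_word_all_True)
  also have "\<dots> = (\<Sum>j<m. g (i + Suc j) * (1/2)^j)"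
    unfolding w2_def by (auto simp del: upt_Suc intro!: sum.cong)
  finally have "fst (ifs_word (map ?d [1..<n+1]) (0, 0)) = (\<Sum>j<m. g (i + Suc j) * (1/2)^j)" .
  moreover have "snd (ifs_word (map ?d [1..<n+1]) (0, 0)) = (\<Sum>j<n. g (Suc j) * (1/2)^j)"
    unfolding snd_ifs_word by (auto simp del: upt_Suc intro!: sum.cong)
  ultimately show ?thesis
    by (simp add: prod_eq_iff del: upt_Suc)
qed

lemma tendsto_ln_div_ln_at_right_0:
  fixes f :: "real \<Rightarrow> real"
  assumes bounds: "\<And>r. 0 < r \<Longrightarrow> r < 1 \<Longrightarrow> Ka + \<alpha> * ln r \<le> ln (f r) \<and> ln (f r) \<le> Kb + \<alpha> * ln r"
  shows "((\<lambda>r. ln (f r) / ln r) \<longlongrightarrow> \<alpha>) (at_right 0)"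
proof -
  have ln_at_0: "filterlim ln at_infinity (at_right (0::real))"
    by (rule filterlim_mono[OF ln_at_0]) (auto simp: at_infinity_eq_at_top_bot)
  have limit: "((\<lambda>r. \<alpha> + K / ln r) \<longlongrightarrow> \<alpha>) (at_right 0)" for K
    using tendsto_add[OF tendsto_const[of \<alpha>] tendsto_divide_0[OF tendsto_const[of K] ln_at_0]] by simp
  have unit_interval: "eventually (\<lambda>r. 0 < r \<and> r < 1) (at_right (0::real))"
    by (simp add: eventually_at_right_field) (auto intro: exI[of _ 1])
  show ?thesis
  proof (rule tendsto_sandwich[OF _ _ limit[of Kb] limit[of Ka]])
    show "eventually (\<lambda>r. \<alpha> + Kb / ln r \<le> ln (f r) / ln r) (at_right 0)"
      using unit_interval
    proof eventually_elim
      case (elim r)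
      then have "ln r < 0" and "ln (f r) \<le> Kb + \<alpha> * ln r"
        using bounds by auto
      then have "(Kb + \<alpha> * ln r) / ln r \<le> ln (f r) / ln r"
        by (intro divide_right_mono_neg) auto
      also have "(Kb + \<alpha> * ln r) / ln r = \<alpha> + Kb / ln r"
        using \<open>ln r < 0\<close> by (simp add: field_simps)
      finally show ?case .
    qed
    show "eventually (\<lambda>r. ln (f r) / ln r \<le> \<alpha> + Ka / ln r) (at_right 0)"
      using unit_interval
    proof eventually_elim
      case (elim r)
      then have "ln r < 0" and "Ka + \<alpha> * ln r \<le> ln (f r)"
        using bounds by auto
      then have "ln (f r) / ln r \<le> (Ka + \<alpha> * ln r) / ln r"
        by (intro divide_right_mono_neg) auto
      also have "(Ka + \<alpha> * ln r) / ln r = \<alpha> + Ka / ln r"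
        using \<open>ln r < 0\<close> by (simp add: field_simps)
      finally show ?case .
    qed
  qed
qed

lemma obtain_dyadic_scale:
  fixes r :: real
  assumes "0 < r" "r \<le> 1"
  obtains l where "(1/2)^Suc l < r" "r \<le> (1/2)^l"
proof -
  obtain n where "(1/2::real)^n < r"
    using real_arch_pow_inv[OF assms(1), of "1/2"] by auto
  then obtain k where k: "\<forall>i<k. \<not> (1/2::real)^i < r" "(1/2)^k < r"
    using ex_least_nat_le[of "\<lambda>i. (1/2::real)^i < r"] by blast
  moreover have "k \<noteq> 0"
    using k(2) assms(2) by (intro notI) simp
  ultimately show ?thesis
    using that by (cases k) (auto simp del: power_Suc)
qed

lemma tendsto_ln_div_ln_of_dyadic_bounds:
  fixes f :: "real \<Rightarrow> real"
  assumes A: "0 < A" "A < 1" and c: "0 < c"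
    and bounds: "\<And>l r. (1/2)^Suc l < r \<Longrightarrow> r \<le> (1/2)^l \<Longrightarrow> c * A^l \<le> f r \<and> f r \<le> C * A^l"
  shows "((\<lambda>r. ln (f r) / ln r) \<longlongrightarrow> ln A / ln (1/2)) (at_right 0)"
proof (rule tendsto_ln_div_ln_at_right_0[where Ka = "ln c" and Kb = "ln C - ln A"])
  fix r :: real assume r: "0 < r" "r < 1"
  then obtain l where l: "(1/2)^Suc l < r" "r \<le> (1/2)^l"
    by (auto elim: obtain_dyadic_scale)
  define L where "L = ln r / ln (1/2)"
  have ln_half: "ln (1/2::real) < 0"
    by simp
  have "ln ((1/2::real)^Suc l) < ln r"
    using l(1) r(1) by (subst ln_less_cancel_iff) auto
  moreover have "ln r \<le> ln ((1/2::real)^l)"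
    using l(2) r(1) by (subst ln_le_cancel_iff) auto
  ultimately have "(real l + 1) * ln (1/2) < ln r" "ln r \<le> real l * ln (1/2)"
    by (simp_all only: ln_realpow zero_less_divide_iff zero_less_one zero_less_numeral of_nat_Suc add.commute)
  then have "real l \<le> L" "L \<le> real l + 1"
    using ln_half unfolding L_def by (simp_all add: le_divide_eq divide_le_eq)
  moreover have "ln A < 0"
    using A by simp
  ultimately have "L * ln A \<le> real l * ln A" "real l * ln A \<le> (L - 1) * ln A"
    by (simp_all add: mult_right_mono_neg)
  moreover have "ln A / ln (1/2) * ln r = L * ln A"
    by (simp add: L_def)
  moreover have "0 < c * A^l"
    using A c by simp
  then have "ln (c * A^l) \<le> ln (f r)" "ln (f r) \<le> ln (C * A^l)"
    using bounds[OF l] by simp_all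
  moreover have "c * A^l \<le> C * A^l"
    using bounds[OF l] by linarith
  then have "c \<le> C"
    by (rule mult_right_le_imp_le) (simp add: A)
  then have "0 < C"
    using c by simp
  then have "ln (c * A^l) = ln c + real l * ln A" "ln (C * A^l) = ln C + real l * ln A"
    using A c by (simp_all add: ln_mult ln_realpow)
  ultimately show "ln c + ln A / ln (1/2) * ln r \<le> ln (f r) \<and> ln (f r) \<le> ln C - ln A + ln A / ln (1/2) * ln r"
    by (simp add: algebra_simps)
qed

lemma sum_binary_digits:
  "(\<Sum>k=1..n. real (g k) * 2 powi (- (int k - 1))) = (\<Sum>j<n. real (g (Suc j)) * (1/2)^j)"
proof -
  have "(2::real) powi (- (int (Suc j) - 1)) = (1/2)^j" for j
    by (simp add: power_int_minus power_one_over inverse_eq_divide)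
  then show ?thesis
    using sum.atLeast1_atMost_eq[of "\<lambda>k. real (g k) * 2 powi (- (int k - 1))" n] by simp
qed

context ifs_invariant
begin

lemma measure_vimage_ifs_word_le:
  assumes "\<forall>d\<in>set w. fst d \<in> {0, 1}" "B \<in> sets borel"
  shows "min (x/2) ((1-x)/2) ^ length w * measure \<nu> (ifs_word w -` B) \<le> measure \<nu> B"
  using assms
proof (induction w arbitrary: B)
  case (Cons d w)
  let ?c = "min (x/2) ((1-x)/2)"
  have "ifs_word (d # w) -` B = ifs_word w -` (ifs_map (fst d) (snd d) -` B)"
    by auto
  moreover have "ifs_map (fst d) (snd d) -` B \<in> sets borel"
    using measurable_sets[OF ifs_map_measurable Cons.prems(2)] by simp
  ultimately have "?c ^ length (d # w) * measure \<nu> (ifs_word (d # w) -` B)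
      \<le> ?c * measure \<nu> (ifs_map (fst d) (snd d) -` B)"
    using Cons x_gt_0 x_lt_1 by (simp add: mult.assoc mult_left_mono)
  also have "\<dots> \<le> measure \<nu> B"
    using Cons.prems by (intro measure_vimage_ifs_map_le) auto
  finally show ?case .
qed (simp add: vimage_def)

lemma measure_cball_le:
  assumes r: "r \<le> 2 * (1/2)^l"
  shows "measure \<nu> (cball z r) \<le> 9 * ((1+x)/4)^l"
proof -
  define k where "k c = \<lfloor>c / (2 * (1/2)^l)\<rfloor>" for c :: real
  let ?D = "{-1, 0, 1::int} \<times> {-1, 0, 1::int}"
  define R where "R d = dyadic l (k (fst z) + fst d) \<times> dyadic l (k (snd z) + snd d)" for d
  have R_borel: "R d \<in> sets \<nu>" for d
    by (simp add: R_def sets_eq_borel borel_Times)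
  have "cball z r \<subseteq> (\<Union>d\<in>?D. R d)"
  proof
    fix p assume "p \<in> cball z r"
    then have "\<bar>fst p - fst z\<bar> \<le> 2 * (1/2)^l" "\<bar>snd p - snd z\<bar> \<le> 2 * (1/2)^l"
      using dist_fst_le[of z p] dist_snd_le[of z p] r by (auto simp: dist_real_def mem_cball)
    then obtain d e where "d \<in> {-1, 0, 1}" "fst p \<in> dyadic l (k (fst z) + d)"
      and "e \<in> {-1, 0, 1}" "snd p \<in> dyadic l (k (snd z) + e)"
      unfolding k_def by (blast dest: mem_dyadic_neighbours)
    then show "p \<in> (\<Union>d\<in>?D. R d)"
      by (intro UN_I[of "(d, e)"]) (auto simp: R_def mem_Times_iff)
  qed
  then have "measure \<nu> (cball z r) \<le> measure \<nu> (\<Union>d\<in>?D. R d)"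
    using R_borel by (intro finite_measure_mono sets.finite_UN) auto
  also have "\<dots> \<le> (\<Sum>d\<in>?D. measure \<nu> (R d))"
    using R_borel by (intro measure_UNION_le) auto
  also have "\<dots> \<le> (\<Sum>d\<in>?D. (1/2)^l * ((1+x)/2)^l)"
    unfolding R_def by (intro sum_mono measure_dyadic_rect_le)
  also have "\<dots> = 9 * ((1+x)/4)^l"
    by (simp add: power_mult_distrib[symmetric])
  finally show ?thesis .
qed

lemma measure_cball_ifs_word_ge:
  assumes digits: "\<forall>d\<in>set w. fst d \<in> {0, 1}" and r: "4 * (1/2)^l \<le> r"
  shows "min (x/2) ((1-x)/2) ^ length w * ((1+x)/4)^l \<le> measure \<nu> (cball (ifs_word w (0, 0)) r)"
proof -
  let ?c = "min (x/2) ((1-x)/2)"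
  let ?S = "{0..2 * (1/2::real)^l} \<times> {0..2 * (1/2::real)^l}"
  have "?S \<subseteq> ifs_word w -` cball (ifs_word w (0, 0)) r"
  proof
    fix p assume "p \<in> ?S"
    then have "dist (0, 0) p \<le> r"
      using r sqrt_sum_squares_le_sum_abs[of "fst p" "snd p"] by (cases p) (auto simp: dist_Pair_Pair)
    then show "p \<in> ifs_word w -` cball (ifs_word w (0, 0)) r"
      using dist_ifs_word_le[of w "(0, 0)" p] by (simp add: mem_cball)
  qed
  then have "measure \<nu> ?S \<le> measure \<nu> (ifs_word w -` cball (ifs_word w (0, 0)) r)"
    using measurable_sets[OF ifs_word_measurable, of "cball _ r"] by (intro measure_mono_borel) auto
  moreover have "((1+x)/4)^l \<le> measure \<nu> ?S"
    using measure_initial_rect_ge[of l l] by (simp add: power_mult_distrib[symmetric])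
  moreover have "0 \<le> ?c"
    using x_gt_0 x_lt_1 by simp
  ultimately have "?c ^ length w * ((1+x)/4)^l \<le> ?c ^ length w * measure \<nu> (ifs_word w -` cball (ifs_word w (0, 0)) r)"
    by (intro mult_left_mono) auto
  also have "\<dots> \<le> measure \<nu> (cball (ifs_word w (0, 0)) r)"
    using digits by (intro measure_vimage_ifs_word_le) auto
  finally show ?thesis .
qed

lemma local_dimension_ifs_word:
  assumes digits: "\<forall>d\<in>set w. fst d \<in> {0, 1}"
  shows "((\<lambda>r. ln (measure \<nu> (cball (ifs_word w (0, 0)) r)) / ln r) \<longlongrightarrow> 2 - ln (1 + x) / ln 2) (at_right 0)"
proof -
  let ?A = "(1+x)/4" and ?c = "min (x/2) ((1-x)/2)"
  have "ln ?A = ln (1 + x) - ln 4"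
    using x_gt_0 ln_div[of "1 + x" 4] by simp
  moreover have "ln (4::real) = 2 * ln 2"
    using ln_realpow[of 2 2] by simp
  ultimately have "ln (1 + x) / ln 2 = ln ?A / ln 2 + 2"
    by (simp add: diff_divide_distrib)
  moreover have "ln (1/2::real) = - ln 2"
    using ln_div[of 1 2] by simp
  ultimately have "2 - ln (1 + x) / ln 2 = ln ?A / ln (1/2)"
    by simp
  moreover have "((\<lambda>r. ln (measure \<nu> (cball (ifs_word w (0, 0)) r)) / ln r) \<longlongrightarrow> ln ?A / ln (1/2)) (at_right 0)"
  proof (rule tendsto_ln_div_ln_of_dyadic_bounds[where c = "?c ^ length w * ?A^3" and C = 9])
    fix l :: nat and r :: real assume r: "(1/2)^Suc l < r" "r \<le> (1/2)^l"
    have "?c ^ length w * ?A^(l + 3) \<le> measure \<nu> (cball (ifs_word w (0, 0)) r)"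
    proof (rule measure_cball_ifs_word_ge[OF digits])
      have "4 * (1/2::real)^(l + 3) = (1/2)^Suc l"
        by (simp add: power_add power_one_over)
      then show "4 * (1/2)^(l + 3) \<le> r"
        using r(1) by simp
    qed
    moreover have "measure \<nu> (cball (ifs_word w (0, 0)) r) \<le> 9 * ?A^l"
      using r(2) zero_le_power[of "1/2::real" l] by (intro measure_cball_le) linarith
    ultimately show "?c ^ length w * ?A^3 * ?A^l \<le> measure \<nu> (cball (ifs_word w (0, 0)) r)
        \<and> measure \<nu> (cball (ifs_word w (0, 0)) r) \<le> 9 * ?A^l"
      by (simp add: power_add mult_ac)
  qed (use x_gt_0 x_lt_1 in auto)
  ultimately show ?thesis
    by simp
qed

end

theorem theorem7p1:
  fixes M :: "'w measure" and Q U :: "nat \<Rightarrow> 'w \<Rightarrow> real" and x :: real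
    and \<gamma> \<gamma>' :: "nat \<Rightarrow> nat" and m n :: nat and z1 z2 :: real
  assumes "prob_space M"
    and "\<And>k. k \<ge> 1 \<Longrightarrow> Q k \<in> borel_measurable M"
    and "\<And>k. k \<ge> 1 \<Longrightarrow> U k \<in> borel_measurable M"
    and "prob_space.indep_vars M (\<lambda>_. borel)
           (\<lambda>i. case i of Inl k \<Rightarrow> Q k | Inr k \<Rightarrow> U k)
           (Inl ` {1..} \<union> Inr ` {1..})"
    and "\<And>k. k \<ge> 1 \<Longrightarrow> measure M {\<omega> \<in> space M. Q k \<omega> = 0} = 1/2"
    and "\<And>k. k \<ge> 1 \<Longrightarrow> measure M {\<omega> \<in> space M. Q k \<omega> = 1} = 1/2"
    and "\<And>k. k \<ge> 1 \<Longrightarrow> distributed M lborel (U k) (\<lambda>t. indicator {0..1} t)"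
    and "0 < x" and "x < 1"
    and "m \<ge> 1" and "n \<ge> 1"
    and "\<forall>k\<in>{1..m}. \<gamma> k \<in> {0, 1}" and "\<forall>k\<in>{1..n}. \<gamma>' k \<in> {0, 1}"
    and "z1 = (\<Sum>k=1..m. real (\<gamma> k) * 2 powi (- (int k - 1)))"
    and "z2 = (\<Sum>k=1..n. real (\<gamma>' k) * 2 powi (- (int k - 1)))"
    and "\<exists>i. i + m \<le> n \<and> (\<forall>k\<in>{1..m}. \<gamma> k = \<gamma>' (i + k))"
  shows "((\<lambda>r. ln (measure (mu M Q U x) (cball (z1, z2) r)) / ln r)
           \<longlongrightarrow> 2 - ln (1 + x) / ln 2) (at_right 0)"
proof -
  interpret input: input_process M Q U
    using assms(1-7) by (simp add: input_process_def input_process_axioms_def input_index_def input_var_def[abs_def])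
  interpret ifs: ifs_invariant "mu M Q U x" x
    using assms(8,9)
    by (intro ifs_invariant.intro ifs_invariant_axioms.intro input.prob_space_mu input.sets_mu input.mu_square
        input.mu_self_similar) auto
  obtain i where i: "i + m \<le> n" "\<forall>k\<in>{1..m}. \<gamma> k = \<gamma>' (i + k)"
    using assms(16) by blast
  define w where "w = map (\<lambda>k. (real (\<gamma>' k), i < k \<and> k \<le> i + m)) [1..<n+1]"
  have "(z1, z2) = ifs_word w (0, 0)"
    using i unfolding w_def ifs_word_window[OF i(1)] assms(14,15) sum_binary_digits by (auto intro!: sum.cong)
  moreover have "\<forall>d\<in>set w. fst d \<in> {0, 1}"
    using assms(13) by (auto simp: w_def)
  ultimately show ?thesis
    using ifs.local_dimension_ifs_word by simp
qed

end
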